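(* For every $n\ge 1$, $|\mathrm{Sort}_n(132,321)|$ equals the $n$-th term of OEIS sequence A102407, i.e. the number of Dyck paths of semilength $n$ that do not contain $dudu$ as a factor (four consecutive steps down, up, down, up).
   Context: A permutation $x$ contains a pattern $p$ if it has a subsequence order-isomorphic to $p$; otherwise it avoids $p$. For a set $T$ of patterns, the map $s_T$ is defined as follows: the entries of the input permutation $x=x_1\cdots x_n$ are read from left to right, with an initially empty stack. At each step, if the input is nonempty and pushing the next input entry onto the stack produces a stack whose contents, read from top to bottom, avoid every pattern in $T$, that entry is pushed; otherwise the top entry of the stack is popped and appended to the output. When the input is exhausted, the remaining stack entries are popped one at a time to the output. $s_T(x)$ is the output word. Write $s_{\sigma,\tau}=s_{\{\sigma,\tau\}}$ and $s=s_{\{21\}}$ (West's stack-sorting map, whose stack is increasing from top to bottom). $\mathrm{Sort}_n(\sigma,\tau)$ is the set of $x\in S_n$ such that $s(s_{\sigma,\tau}(x))=12\cdots n$. A Dyck path of semilength $n$ is a lattice path from $(0,0)$ to $(2n,0)$ with steps $u=(1,1)$ and $d=(1,-1)$ never going below the $x$-axis. *)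

theory Defs
  imports Main "HOL-Library.Sublist" "HOL-Combinatorics.Multiset_Permutations"
begin

definition order_iso :: "nat list \<Rightarrow> nat list \<Rightarrow> bool" where
  "order_iso w p \<longleftrightarrow> length w = length p \<and>
     (\<forall>i<length w. \<forall>j<length w. (w ! i < w ! j \<longleftrightarrow> p ! i < p ! j))"

definition contains :: "nat list \<Rightarrow> nat list \<Rightarrow> bool" where
  "contains x p \<longleftrightarrow> (\<exists>w. subseq w x \<and> order_iso w p)"

definition avoids_all :: "nat list set \<Rightarrow> nat list \<Rightarrow> bool" where
  "avoids_all T x \<longleftrightarrow> (\<forall>p\<in>T. \<not> contains x p)"

text \<open>Arguments: pattern set, remaining input,
  stack contents read from top (head) to bottom.
  If a push is forbidden but the stack is empty (never happens for patterns of
  length at least 2), the entry is pushed anyway, to keep the function total.\<close>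
function stack_run :: "nat list set \<Rightarrow> nat list \<Rightarrow> nat list \<Rightarrow> nat list" where
  "stack_run T [] [] = []"
| "stack_run T [] (y # ys) = y # stack_run T [] ys"
| "stack_run T (x # xs) stk =
     (if avoids_all T (x # stk) then stack_run T xs (x # stk)
      else (case stk of [] \<Rightarrow> stack_run T xs [x]
                      | y # ys \<Rightarrow> y # stack_run T (x # xs) ys))"
  by pat_completeness auto
termination
  by (relation "measure (\<lambda>(T, inp, stk). 2 * length inp + length stk)") auto

definition s_map :: "nat list set \<Rightarrow> nat list \<Rightarrow> nat list" where
  "s_map T x = stack_run T x []"

definition west_s :: "nat list \<Rightarrow> nat list" where
  "west_s x = s_map {[2,1]} x"

definition Sort_set :: "nat \<Rightarrow> nat list \<Rightarrow> nat list \<Rightarrow> nat list set" where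
  "Sort_set n \<sigma> \<tau> = {x \<in> permutations_of_set {1..n}. west_s (s_map {\<sigma>, \<tau>} x) = [1..<n+1]}"

text \<open>Dyck paths: True = up step u, False = down step d.\<close>
definition height :: "bool list \<Rightarrow> int" where
  "height w = (\<Sum>b\<leftarrow>w. if b then 1 else -1)"

definition dyck_path :: "nat \<Rightarrow> bool list \<Rightarrow> bool" where
  "dyck_path n w \<longleftrightarrow> length w = 2 * n \<and> height w = 0 \<and>
     (\<forall>k\<le>length w. height (take k w) \<ge> 0)"

definition A102407 :: "nat \<Rightarrow> nat" where
  "A102407 n = card {w. dyck_path n w \<and> \<not> sublist [False, True, False, True] w}"

end

theory Submission
  imports Defs
begin

text \<open>West's stack sorts a permutation exactly when it avoids 231, so x is sortable when the
  output of the (132,321)-machine on x avoids 231. On such an input the stack of the machine is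
  always an increasing word with at most one larger entry, a peak, on top: each peak must be
  popped by the next entry and successive peaks must decrease, so the output is a decreasing
  word followed by an increasing one.

  Inserting n + 1 into a sortable permutation y of length n keeps it sortable exactly at the first
  k sites, where k is the length of the initial decreasing run of y, plus one if the entry after
  that run is smaller than the first entry. With the label (k, t), t recording whether the extra
  site is present, insertion at the front gives the label (k + 1, True) or (k + 2, True) according
  to t, and insertion at site i > 0 gives (i, False). Dyck paths avoiding dudu grow by the same
  rule: k is the length of the first ascent, plus one unless the first descent is a single step
  followed by further steps. Generating trees with the same rule and root have equally many
  nodes on every level.\<close>

section \<open>Generating trees\<close>

primrec label_levels ::
  "('l \<Rightarrow> nat) \<Rightarrow> ('l \<Rightarrow> nat \<Rightarrow> 'l) \<Rightarrow> 'l multiset \<Rightarrow> nat \<Rightarrow> 'l multiset" where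
  "label_levels deg succ M 0 = M"
| "label_levels deg succ M (Suc n) = (\<Sum>l\<in>#label_levels deg succ M n. \<Sum>i<deg l. {#succ l i#})"

lemma generating_tree_level_Suc:
  fixes deg :: "'l \<Rightarrow> nat"
  assumes fin: "finite A"
    and bij: "bij_betw (\<lambda>(y, i). child y i) (SIGMA y:A. {..<deg (lab y)}) B"
    and labels: "\<And>y i. y \<in> A \<Longrightarrow> i < deg (lab y) \<Longrightarrow> lab (child y i) = succ (lab y) i"
  shows "image_mset lab (mset_set B) = (\<Sum>l\<in>#image_mset lab (mset_set A). \<Sum>i<deg l. {#succ l i#})"
proof -
  let ?f = "\<lambda>(y, i). child y i" and ?\<Sigma> = "SIGMA y:A. {..<deg (lab y)}"
  have "image_mset lab (mset_set B) = image_mset lab (image_mset ?f (mset_set ?\<Sigma>))"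
    using bij by (simp add: bij_betw_def image_mset_mset_set)
  also have "\<dots> = (\<Sum>(y, i)\<in>?\<Sigma>. {#lab (child y i)#})"
    by (simp add: sum_unfold_sum_mset multiset.map_comp comp_def split_def)
  also have "\<dots> = (\<Sum>y\<in>A. \<Sum>i<deg (lab y). {#lab (child y i)#})"
    by (rule sum.Sigma[symmetric]) (use fin in auto)
  also have "\<dots> = (\<Sum>y\<in>A. \<Sum>i<deg (lab y). {#succ (lab y) i#})"
    using labels by simp
  also have "\<dots> = (\<Sum>l\<in>#image_mset lab (mset_set A). \<Sum>i<deg l. {#succ l i#})"
    by (simp add: sum_unfold_sum_mset multiset.map_comp comp_def)
  finally show ?thesis .
qed

lemma generating_tree_levels:
  assumes fin: "\<And>n. finite (S n)"
    and bij: "\<And>n. bij_betw (\<lambda>(y, i). child y i) (SIGMA y:S n. {..<deg (lab y)}) (S (Suc n))"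
    and "\<And>n y i. y \<in> S n \<Longrightarrow> i < deg (lab y) \<Longrightarrow> lab (child y i) = succ (lab y) i"
  shows "image_mset lab (mset_set (S n)) = label_levels deg succ (image_mset lab (mset_set (S 0))) n"
proof (induction n)
  case (Suc n)
  have "image_mset lab (mset_set (S (Suc n))) =
             (\<Sum>l\<in>#image_mset lab (mset_set (S n)). \<Sum>i<deg l. {#succ l i#})"
    by (rule generating_tree_level_Suc[where lab = lab and deg = deg, OF fin bij assms(3)])
  then show ?case using Suc.IH by (simp only: label_levels.simps)
qed simp

definition tree_rule :: "nat \<times> bool \<Rightarrow> nat \<Rightarrow> nat \<times> bool" where
  "tree_rule l i = (if i = 0 then (fst l + (if snd l then 1 else 2), True) else (i, False))"

lemma sorted_wrt_subseq: "subseq xs ys \<Longrightarrow> sorted_wrt R ys \<Longrightarrow> sorted_wrt R xs"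
  by (induction rule: list_emb.induct) (auto dest: list_emb_set)

lemma subseq_pair_sorted_wrt: "subseq [x,y] ys \<Longrightarrow> sorted_wrt R ys \<Longrightarrow> R x y"
  using sorted_wrt_subseq by fastforce

lemma subseq_Cons_right_iff:
  "subseq xs (y # ys) \<longleftrightarrow> subseq xs ys \<or> (\<exists>xs'. xs = y # xs' \<and> subseq xs' ys)"
  by (cases xs) (auto dest: subseq_Cons')

lemma subseq_pair_Cons_iff: "subseq [y,z] (b # L) \<longleftrightarrow> subseq [y,z] L \<or> (y = b \<and> z \<in> set L)"
  by (subst subseq_Cons_right_iff) (auto simp only: subseq_singleton_left list.inject)

lemma subseq_triple_Cons_iff:
  "subseq [x,y,z] (b # L) \<longleftrightarrow> subseq [x,y,z] L \<or> (x = b \<and> subseq [y,z] L)"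
  by (subst subseq_Cons_right_iff) blast

lemma subseq_triple_Cons_Cons_increasing:
  assumes "sorted_wrt (<) W" and "subseq [x,y,z] (b # a # W)"
  shows "(x = b \<and> y = a \<and> z \<in> set W) \<or> y < z"
proof -
  have "(subseq [x,y,z] W \<or> x = a \<and> subseq [y,z] W) \<or>
        x = b \<and> (subseq [y,z] W \<or> y = a \<and> z \<in> set W)"
    using assms(2) by (simp only: subseq_triple_Cons_iff subseq_pair_Cons_iff)
  then have "subseq [y,z] W \<or> (x = b \<and> y = a \<and> z \<in> set W)"
    using subseq_Cons'[of x "[y,z]" W] by blast
  then show ?thesis using subseq_pair_sorted_wrt[OF _ assms(1), of y z] by blast
qed

lemma subseq_pair_join:
  "distinct L \<Longrightarrow> subseq [x,y] L \<Longrightarrow> subseq [y,v] L \<Longrightarrow> subseq [x,y,v] L"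
proof (induction L)
  case (Cons u L)
  show ?case
  proof (cases "subseq [x,y] L")
    case True
    then have "y \<noteq> u" using Cons.prems(1) by (auto dest: subseq_Cons' simp: subseq_singleton_left)
    then have "subseq [y,v] L" using Cons.prems(3) by (simp add: subseq_pair_Cons_iff)
    then show ?thesis using Cons True by (simp add: list_emb_Cons)
  next
    case False
    then have "x = u \<and> y \<in> set L" using Cons.prems(2) by (simp only: subseq_pair_Cons_iff) blast
    moreover have "u \<notin> set L" using Cons.prems(1) by simp
    ultimately have "y \<noteq> u" by auto
    then have "subseq [y,v] L" using Cons.prems(3) by simp
    then show ?thesis using \<open>x = u \<and> y \<in> set L\<close> by simp
  qed
qed simp

lemma sorted_wrt_Cons_less_hd:
  "sorted_wrt (<) W \<Longrightarrow> W = [] \<or> b < hd W \<Longrightarrow> sorted_wrt (<) (b # (W::'a::order list))"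
  by (cases W) auto

lemma sorted_wrt_greater_le_hd: "sorted_wrt (>) q \<Longrightarrow> v \<in> set q \<Longrightarrow> v \<le> hd (q::'a::order list)"
  by (cases q) auto

lemma sorted_wrt_greater_last_le: "sorted_wrt (>) q \<Longrightarrow> v \<in> set q \<Longrightarrow> last (q::'a::order list) \<le> v"
  using sorted_wrt_rev[of "(<)" q] by (cases "rev q") (auto simp flip: hd_rev)

lemma takeWhile_neq_append_Cons: "N \<notin> set A \<Longrightarrow> takeWhile (\<lambda>v. v \<noteq> N) (A @ N # B) = A"
  by (induction A) auto

lemma length_permutations_of_set_atLeastAtMost:
  "x \<in> permutations_of_set {1..n} \<Longrightarrow> length x = n"
  using length_finite_permutations_of_set by fastforce

lemma order_iso_2: "order_iso [a,b] [p,q] \<longleftrightarrow> ((a<b) = (p<q)) \<and> ((b<a) = (q<p))"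
  unfolding order_iso_def by (simp add: numeral_2_eq_2 All_less_Suc) blast

lemma order_iso_3:
  "order_iso [a,b,c] [p,q,r] \<longleftrightarrow> ((a<b) = (p<q)) \<and> ((a<c) = (p<r)) \<and> ((b<c) = (q<r))
     \<and> ((b<a) = (q<p)) \<and> ((c<a) = (r<p)) \<and> ((c<b) = (r<q))"
  unfolding order_iso_def by (simp add: numeral_3_eq_3 All_less_Suc) blast

lemma contains_2_iff: "contains xs [p,q] \<longleftrightarrow> (\<exists>a b. subseq [a,b] xs \<and> order_iso [a,b] [p,q])"
proof
  assume "contains xs [p,q]"
  then obtain w where w: "subseq w xs" "order_iso w [p,q]" unfolding contains_def by blast
  then obtain a b where "w = [a,b]" by (auto simp: order_iso_def length_Suc_conv numeral_2_eq_2)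
  with w show "\<exists>a b. subseq [a,b] xs \<and> order_iso [a,b] [p,q]" by blast
qed (auto simp: contains_def)

lemma contains_3_iff:
  "contains xs [p,q,r] \<longleftrightarrow> (\<exists>a b c. subseq [a,b,c] xs \<and> order_iso [a,b,c] [p,q,r])"
proof
  assume "contains xs [p,q,r]"
  then obtain w where w: "subseq w xs" "order_iso w [p,q,r]" unfolding contains_def by blast
  then obtain a b c where "w = [a,b,c]" by (auto simp: order_iso_def length_Suc_conv numeral_3_eq_3)
  with w show "\<exists>a b c. subseq [a,b,c] xs \<and> order_iso [a,b,c] [p,q,r]" by blast
qed (auto simp: contains_def)

lemma contains_21_iff: "contains xs [2,1] \<longleftrightarrow> (\<exists>a b. subseq [a,b] xs \<and> b < a)"
  unfolding contains_2_iff order_iso_2 by (intro ex_cong1) auto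

lemma contains_132_iff: "contains xs [1,3,2] \<longleftrightarrow> (\<exists>a b c. subseq [a,b,c] xs \<and> a < c \<and> c < b)"
  unfolding contains_3_iff order_iso_3 by (intro ex_cong1) auto

lemma contains_321_iff: "contains xs [3,2,1] \<longleftrightarrow> (\<exists>a b c. subseq [a,b,c] xs \<and> c < b \<and> b < a)"
  unfolding contains_3_iff order_iso_3 by (intro ex_cong1) auto

lemma contains_231_iff: "contains xs [2,3,1] \<longleftrightarrow> (\<exists>a b c. subseq [a,b,c] xs \<and> c < a \<and> a < b)"
  unfolding contains_3_iff order_iso_3 by (intro ex_cong1) auto

declare stack_run.simps(3)[simp del]

lemma stack_run_push: "avoids_all T (x # stk) \<Longrightarrow> stack_run T (x # xs) stk = stack_run T xs (x # stk)"
  by (simp add: stack_run.simps(3))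

lemma stack_run_pop:
  "\<not> avoids_all T (x # y # ys) \<Longrightarrow> stack_run T (x # xs) (y # ys) = y # stack_run T (x # xs) ys"
  by (simp add: stack_run.simps(3))

lemma stack_run_push_Nil: "\<not> avoids_all T [x] \<Longrightarrow> stack_run T (x # xs) [] = stack_run T xs [x]"
  by (simp add: stack_run.simps(3))

lemma stack_run_no_input: "stack_run T [] stk = stk"
  by (induction stk) auto

lemma mset_stack_run: "mset (stack_run T inp stk) = mset inp + mset stk"
proof (induction T inp stk rule: stack_run.induct)
  case (3 T x xs stk)
  then show ?case
    by (cases "avoids_all T (x # stk)"; cases stk)
      (auto simp: stack_run_push stack_run_pop stack_run_push_Nil)
qed auto

lemma set_stack_run: "set (stack_run T inp stk) = set inp \<union> set stk"
  by (metis mset_stack_run set_mset_mset set_mset_union)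

lemma distinct_stack_run: "distinct (stack_run T inp stk) \<longleftrightarrow> distinct (inp @ stk)"
  by (rule mset_eq_imp_distinct_iff) (simp add: mset_stack_run)

lemma subseq_stack_run: "subseq stk (stack_run T inp stk)"
proof (induction T inp stk rule: stack_run.induct)
  case (3 T x xs stk)
  then show ?case
    by (cases "avoids_all T (x # stk)"; cases stk)
      (auto simp: stack_run_push stack_run_pop stack_run_push_Nil dest: subseq_Cons')
qed auto

lemma stack_run_pops_before:
  "(\<And>s. subseq [a,w] s \<Longrightarrow> \<not> avoids_all T (z # s)) \<Longrightarrow>
   subseq [a,w] stk \<Longrightarrow> z \<in> set inp \<Longrightarrow> subseq [a,z] (stack_run T inp stk)"
proof (induction T inp stk rule: stack_run.induct)
  case (3 T x xs stk)
  show ?case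
  proof (cases "avoids_all T (x # stk)")
    case True
    then have "x \<noteq> z" using "3.prems"(1,2) by blast
    then have "z \<in> set xs" using "3.prems"(3) by simp
    moreover have "subseq [a,w] (x # stk)" using "3.prems"(2) by (rule list_emb_Cons)
    ultimately show ?thesis using "3.IH"(1)[OF True "3.prems"(1)] by (simp add: stack_run_push[OF True])
  next
    case False
    show ?thesis
    proof (cases stk)
      case Nil
      then show ?thesis using "3.prems"(2) by simp
    next
      case (Cons y ys)
      have run: "stack_run T (x # xs) stk = y # stack_run T (x # xs) ys"
        using False Cons stack_run_pop by simp
      show ?thesis
      proof (cases "y = a")
        case True
        then show ?thesis using run "3.prems"(3) by (auto simp: subseq_singleton_left set_stack_run)
      next
        case ya: False
        have "subseq [a,w] ys" using "3.prems"(2) Cons ya by (simp add: subseq_pair_Cons_iff)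
        from "3.IH"(3)[OF False Cons "3.prems"(1) this "3.prems"(3)]
        have "subseq [a,z] (y # stack_run T (x # xs) ys)" by (rule list_emb_Cons)
        then show ?thesis using run by simp
      qed
    qed
  qed
qed simp_all

abbreviation T_132_321 :: "nat list set" where "T_132_321 \<equiv> {[1,3,2], [3,2,1]}"

lemma avoids_132_321_iff:
  "avoids_all T_132_321 xs \<longleftrightarrow>
   \<not> (\<exists>a b c. subseq [a,b,c] xs \<and> a < c \<and> c < b) \<and> \<not> (\<exists>a b c. subseq [a,b,c] xs \<and> c < b \<and> b < a)"
  unfolding avoids_all_def contains_132_iff[symmetric] contains_321_iff[symmetric] by simp

lemma avoids_132_321_Cons_increasing:
  assumes "sorted_wrt (<) W"
  shows "avoids_all T_132_321 (b # W)"
proof -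
  have "y < z" if "subseq [x,y,z] (b # W)" for x y z
  proof -
    have "subseq [x,y,z] W \<or> (x = b \<and> subseq [y,z] W)"
      using that by (simp only: subseq_triple_Cons_iff)
    then have "subseq [y,z] W" by (auto dest: subseq_Cons')
    then show ?thesis using assms by (rule subseq_pair_sorted_wrt)
  qed
  then show ?thesis unfolding avoids_132_321_iff by (meson order.asym)
qed

lemma avoids_132_321_Cons_Cons_increasing_iff:
  assumes "sorted_wrt (<) W"
  shows "avoids_all T_132_321 (b # a # W) \<longleftrightarrow> (\<forall>z\<in>set W. \<not> (b < z \<and> z < a) \<and> \<not> (z < a \<and> a < b))"
proof
  assume "avoids_all T_132_321 (b # a # W)"
  moreover have "subseq [b,a,z] (b # a # W)" if "z \<in> set W" for z
    using that by (simp add: subseq_singleton_left)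
  ultimately show "\<forall>z\<in>set W. \<not> (b < z \<and> z < a) \<and> \<not> (z < a \<and> a < b)"
    unfolding avoids_132_321_iff by blast
next
  assume "\<forall>z\<in>set W. \<not> (b < z \<and> z < a) \<and> \<not> (z < a \<and> a < b)"
  then show "avoids_all T_132_321 (b # a # W)"
    unfolding avoids_132_321_iff using subseq_triple_Cons_Cons_increasing[OF assms] by fastforce
qed

lemma avoids_21_iff: "avoids_all {[2,1]} xs \<longleftrightarrow> \<not> (\<exists>a b. subseq [a,b] xs \<and> b < a)"
  unfolding avoids_all_def contains_21_iff[symmetric] by simp

lemma avoids_21_increasing: "sorted_wrt (<) xs \<Longrightarrow> avoids_all {[2,1]} xs"
  unfolding avoids_21_iff by (meson order.asym subseq_pair_sorted_wrt)

lemma not_avoids_21_Cons_Cons: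
  assumes "y < x"
  shows "\<not> avoids_all {[2,1]} (x # y # ys)"
proof -
  have "subseq [x,y] (x # y # ys)" by simp
  then show ?thesis unfolding avoids_21_iff using assms by blast
qed

section \<open>West's stack-sorting map\<close>

lemma stack_run_21_decreasing_prefix:
  "sorted_wrt (>) D \<Longrightarrow> sorted_wrt (<) stk \<Longrightarrow> (\<forall>d\<in>set D. \<forall>s\<in>set stk. d < s) \<Longrightarrow>
   stack_run {[2,1]} (D @ I) stk = stack_run {[2,1]} I (rev D @ stk)"
proof (induction D arbitrary: stk)
  case (Cons d D)
  have s: "sorted_wrt (<) (d # stk)" using Cons.prems by simp
  have "stack_run {[2,1]} ((d # D) @ I) stk = stack_run {[2,1]} (D @ I) (d # stk)"
    using stack_run_push[OF avoids_21_increasing[OF s]] by simp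
  also have "\<dots> = stack_run {[2,1]} I (rev D @ d # stk)"
    using Cons.IH[OF _ s] Cons.prems by simp
  finally show ?case by simp
qed simp

lemma sorted_stack_run_21_increasing:
  "T = {[2,1]} \<Longrightarrow> sorted_wrt (<) inp \<Longrightarrow> sorted_wrt (<) stk \<Longrightarrow> distinct (inp @ stk) \<Longrightarrow>
   sorted (stack_run T inp stk)"
proof (induction T inp stk rule: stack_run.induct)
  case (2 T y ys)
  then show ?case by (simp add: stack_run_no_input strict_sorted_iff del: sorted_wrt.simps)
next
  case (3 T x xs stk)
  show ?case
  proof (cases "avoids_all T (x # stk)")
    case True
    have "sorted_wrt (<) (x # stk)"
    proof (cases stk)
      case (Cons y ys)
      have "\<not> y < x" using True Cons not_avoids_21_Cons_Cons "3.prems"(1) by blast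
      moreover have "x \<noteq> y" using "3.prems"(4) Cons by auto
      ultimately show ?thesis using "3.prems"(3) Cons by auto
    qed simp
    then show ?thesis using "3.IH"(1)[OF True "3.prems"(1)] "3.prems" stack_run_push[OF True] by auto
  next
    case False
    then obtain y ys where stk: "stk = y # ys"
      using "3.prems"(1) avoids_21_increasing[of "[x]"] by (cases stk) auto
    have run: "stack_run T (x # xs) stk = y # stack_run T (x # xs) ys"
      using stack_run_pop False stk by simp
    have "y < x"
    proof (rule ccontr)
      assume "\<not> y < x"
      moreover have "x \<noteq> y" using "3.prems"(4) stk by auto
      ultimately have "sorted_wrt (<) (x # stk)" using "3.prems"(3) stk by auto
      then show False using False avoids_21_increasing "3.prems"(1) by blast
    qed
    then have "\<forall>v \<in> set (stack_run T (x # xs) ys). y \<le> v"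
      using "3.prems"(2,3) stk by (auto simp: set_stack_run)
    moreover have "sorted (stack_run T (x # xs) ys)"
      using "3.IH"(3)[OF False stk "3.prems"(1,2)] "3.prems"(3,4) stk by auto
    ultimately show ?thesis using run by simp
  qed
qed simp

lemma sorted_west_s_decreasing_increasing:
  assumes "sorted_wrt (>) D" and "sorted_wrt (<) I" and "distinct (D @ I)"
  shows "sorted (west_s (D @ I))"
proof -
  have "west_s (D @ I) = stack_run {[2,1]} I (rev D)"
    unfolding west_s_def s_map_def using stack_run_21_decreasing_prefix[OF assms(1), of "[]" I] by simp
  then show ?thesis
    using sorted_stack_run_21_increasing[of "{[2,1]}" I "rev D"] assms by (auto simp: sorted_wrt_rev)
qed

lemma stack_run_21_push_231:
  assumes "avoids_all {[2,1]} (x # stk)" and "c < b"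
    and "(c \<in> set stk \<and> subseq [b,a] (x # xs)) \<or> subseq [c,b,a] (x # xs)"
  shows "(c \<in> set (x # stk) \<and> subseq [b,a] xs) \<or> subseq [c,b,a] xs"
  using assms(3)
proof
  assume h: "c \<in> set stk \<and> subseq [b,a] (x # xs)"
  have "x \<noteq> b"
  proof
    assume "x = b"
    then have "subseq [x,c] (x # stk) \<and> c < x" using h assms(2) by (simp add: subseq_singleton_left)
    with assms(1) show False by (simp only: avoids_21_iff) blast
  qed
  then show ?thesis using h by (simp add: subseq_pair_Cons_iff)
next
  assume "subseq [c,b,a] (x # xs)"
  then have "subseq [c,b,a] xs \<or> (c = x \<and> subseq [b,a] xs)" by (simp only: subseq_triple_Cons_iff)
  then show ?thesis using list.set_intros(1)[of x stk] by blast
qed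

text \<open>In a 231 occurrence c b a, the entry c is popped at the latest when b arrives, hence
  before a is even read.\<close>
lemma stack_run_21_231:
  "T = {[2,1]} \<Longrightarrow> distinct (inp @ stk) \<Longrightarrow> (c \<in> set stk \<and> subseq [b,a] inp) \<or> subseq [c,b,a] inp \<Longrightarrow>
   c < b \<Longrightarrow> subseq [c,a] (stack_run T inp stk)"
proof (induction T inp stk rule: stack_run.induct)
  case (3 T x xs stk)
  show ?case
  proof (cases "avoids_all T (x # stk)")
    case True
    then have "(c \<in> set (x # stk) \<and> subseq [b,a] xs) \<or> subseq [c,b,a] xs"
      using stack_run_21_push_231[of x stk c b a xs] "3.prems"(1,3,4) by simp
    then have "subseq [c,a] (stack_run T xs (x # stk))"
      using "3.IH"(1)[OF True "3.prems"(1)] "3.prems"(2,4) by simp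
    then show ?thesis using stack_run_push[OF True] by simp
  next
    case False
    then obtain y ys where stk: "stk = y # ys"
      using "3.prems"(1) avoids_21_increasing[of "[x]"] by (cases stk) auto
    have run: "stack_run T (x # xs) stk = y # stack_run T (x # xs) ys"
      using stack_run_pop False stk by simp
    have "a \<in> set (x # xs)" using "3.prems"(3) by (metis subseq_Cons' subseq_singleton_left)
    show ?thesis
    proof (cases "y = c")
      case True
      then show ?thesis using run \<open>a \<in> set (x # xs)\<close> by (auto simp: subseq_singleton_left set_stack_run)
    next
      case False
      then have "(c \<in> set ys \<and> subseq [b,a] (x # xs)) \<or> subseq [c,b,a] (x # xs)"
        using "3.prems"(3) stk by auto
      then have "subseq [c,a] (stack_run T (x # xs) ys)"
        using "3.IH"(3)[OF \<open>\<not> avoids_all T (x # stk)\<close> stk "3.prems"(1)] "3.prems"(2,4) stk by simp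
      then have "subseq [c,a] (y # stack_run T (x # xs) ys)" by (rule list_emb_Cons)
      then show ?thesis using run by simp
    qed
  qed
qed simp_all

lemma contains_231_not_sorted_west_s:
  assumes "distinct x" and "contains x [2,3,1]"
  shows "\<not> sorted (west_s x)"
proof
  assume "sorted (west_s x)"
  moreover have "distinct (west_s x)" using assms(1) by (simp add: west_s_def s_map_def distinct_stack_run)
  ultimately have sorted: "sorted_wrt (<) (west_s x)" by (simp add: strict_sorted_iff)
  obtain c b a where "subseq [c,b,a] x" "a < c" "c < b" using assms(2) unfolding contains_231_iff by blast
  then have "subseq [c,a] (west_s x)"
    using stack_run_21_231[of "{[2,1]}" x "[]" c b a] assms(1) by (simp add: west_s_def s_map_def)
  then have "c < a" using sorted by (rule subseq_pair_sorted_wrt)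
  then show False using \<open>a < c\<close> by simp
qed

section \<open>The (132,321)-machine\<close>

text \<open>A symbolic run of the (132,321)-machine. On a sortable input the stack is always an
  increasing word W (read from the top) with at most one larger entry, the peak p, on top of it.
  The next entry must pop the peak, since otherwise a 231 appears in the output; it is then
  pushed and either extends W or becomes the new peak, which must be smaller than the previous
  peak B (None before the first peak). So the output is the decreasing sequence of peaks
  followed by the final W.\<close>
fun sortable_from :: "nat list \<Rightarrow> nat option \<Rightarrow> nat option \<Rightarrow> nat list \<Rightarrow> bool" where
  "sortable_from W p B [] = True"
| "sortable_from W p B (b # r) =
   ((\<forall>a\<in>set_option p. \<not> (b < a \<and> (\<forall>w\<in>set W. w < a \<longrightarrow> w < b))) \<and>
    (if W = [] \<or> b < hd W then sortable_from (b # W) None B r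
     else (\<forall>c\<in>set_option B. b < c) \<and> sortable_from W (Some b) (Some b) r))"

lemma stack_run_132_321_push_increasing:
  "sorted_wrt (<) W \<Longrightarrow> stack_run T_132_321 (b # r) W = stack_run T_132_321 r (b # W)"
  by (rule stack_run_push[OF avoids_132_321_Cons_increasing])

lemma stack_run_132_321_pop_peak:
  assumes W: "sorted_wrt (<) W" "W \<noteq> []" "hd W < a" and dist: "distinct (b # a # W)"
    and pop: "\<not> (b < a \<and> (\<forall>w\<in>set W. w < a \<longrightarrow> w < b))"
  shows "stack_run T_132_321 (b # r) (a # W) = a # stack_run T_132_321 (b # r) W"
proof (rule stack_run_pop)
  show "\<not> avoids_all T_132_321 (b # a # W)"
  proof (cases "b < a")
    case True
    then obtain w where w: "w \<in> set W" "w < a" "\<not> w < b" using pop by blast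
    moreover have "w \<noteq> b" using w(1) dist by auto
    ultimately show ?thesis using avoids_132_321_Cons_Cons_increasing_iff[OF W(1)] by fastforce
  next
    case False
    then have "hd W < a \<and> a < b" using W(3) dist by auto
    then show ?thesis using avoids_132_321_Cons_Cons_increasing_iff[OF W(1)] hd_in_set[OF W(2)] by blast
  qed
qed

lemma stack_run_132_321_pops_before:
  assumes "subseq [a,w] stk" and "z < w" and "w < a" and "z \<in> set inp"
  shows "subseq [a,z] (stack_run T_132_321 inp stk)"
proof (rule stack_run_pops_before[OF _ assms(1,4)])
  fix s assume "subseq [a,w] s"
  then have "subseq [z,a,w] (z # s)" by simp
  then show "\<not> avoids_all T_132_321 (z # s)" unfolding avoids_132_321_iff using assms(2,3) by blast
qed

lemma stack_run_132_321_before_small: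
  assumes "subseq [a,w] stk" and "w < a" and "subseq [a,z] stk \<or> (z \<in> set inp \<and> z < w)"
  shows "subseq [a,z] (stack_run T_132_321 inp stk)"
  using assms subseq_stack_run[of stk T_132_321 inp] stack_run_132_321_pops_before[OF assms(1)]
  by (blast intro: subseq_order.order_trans)

definition dec_inc_split :: "nat option \<Rightarrow> nat list \<Rightarrow> bool" where
  "dec_inc_split B out \<longleftrightarrow> (\<exists>D I. out = D @ I \<and> sorted_wrt (>) D \<and> sorted_wrt (<) I \<and>
     (\<forall>c\<in>set_option B. \<forall>d\<in>set D. d \<le> c))"

lemma dec_inc_split_mono:
  "dec_inc_split (Some b) out \<Longrightarrow> \<forall>c\<in>set_option B. b < c \<Longrightarrow> dec_inc_split B out"
  unfolding dec_inc_split_def by fastforce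

lemma dec_inc_split_Cons:
  assumes "dec_inc_split (Some a) out" and "a \<notin> set out"
  shows "dec_inc_split (Some a) (a # out)"
proof -
  obtain D I where DI: "out = D @ I" "sorted_wrt (>) D" "sorted_wrt (<) I" "\<forall>d\<in>set D. d \<le> a"
    using assms(1) unfolding dec_inc_split_def by auto
  moreover have "\<forall>d\<in>set D. d \<noteq> a" using DI(1) assms(2) by auto
  ultimately have "\<forall>d\<in>set D. d < a" by (auto simp: le_less)
  then show ?thesis unfolding dec_inc_split_def using DI
    by (intro exI[of _ "a # D"] exI[of _ I]) auto
qed

lemma dec_inc_split_pop_peak:
  assumes W: "sorted_wrt (<) W" "W \<noteq> []" "hd W < a" and dist: "distinct (inp @ a # W)"
    and sortable: "sortable_from W (Some a) (Some a) inp"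
    and popped: "sortable_from W None (Some a) inp \<Longrightarrow> dec_inc_split (Some a) (stack_run T_132_321 inp W)"
  shows "dec_inc_split (Some a) (stack_run T_132_321 inp (a # W))"
proof (cases inp)
  case Nil
  then show ?thesis using W(1) unfolding dec_inc_split_def
    by (intro exI[of _ "[a]"] exI[of _ W]) (simp add: stack_run_no_input)
next
  case (Cons b r)
  then have pop: "\<not> (b < a \<and> (\<forall>w\<in>set W. w < a \<longrightarrow> w < b))" "sortable_from W None (Some a) inp"
    using sortable by simp_all
  moreover have "a \<notin> set (stack_run T_132_321 inp W)" using dist by (simp add: set_stack_run)
  ultimately show ?thesis
    using stack_run_132_321_pop_peak[OF W] dist popped Cons by (simp add: dec_inc_split_Cons)
qed

lemma sortable_from_output:
  "sortable_from W None B inp \<Longrightarrow> sorted_wrt (<) W \<Longrightarrow> distinct (inp @ W) \<Longrightarrow>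
   dec_inc_split B (stack_run T_132_321 inp W)"
proof (induction inp arbitrary: W B)
  case Nil
  then show ?case unfolding dec_inc_split_def
    by (intro exI[of _ "[]"] exI[of _ W]) (simp add: stack_run_no_input)
next
  case (Cons b r)
  note push = stack_run_132_321_push_increasing[OF Cons.prems(2)]
  show ?case
  proof (cases "W = [] \<or> b < hd W")
    case True
    then show ?thesis using Cons.IH[of "b # W" B] Cons.prems sorted_wrt_Cons_less_hd[OF Cons.prems(2) True]
      unfolding push by simp
  next
    case False
    moreover have "b \<noteq> hd W" using Cons.prems(3) False by (cases W) auto
    ultimately have W: "W \<noteq> []" "hd W < b" by auto
    have "dec_inc_split (Some b) (stack_run T_132_321 r (b # W))"
    proof (rule dec_inc_split_pop_peak[OF Cons.prems(2) W])
      show "distinct (r @ b # W)" "sortable_from W (Some b) (Some b) r" using Cons.prems False by auto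
      show "dec_inc_split (Some b) (stack_run T_132_321 r W)" if "sortable_from W None (Some b) r"
        using Cons.IH[OF that Cons.prems(2)] Cons.prems(3) by simp
    qed
    then show ?thesis unfolding push using Cons.prems(1) False by (auto intro: dec_inc_split_mono)
  qed
qed

lemma contains_231_new_peak_above_bound:
  assumes W: "sorted_wrt (<) W" "W \<noteq> []" "hd W < b"
    and c: "c \<in> set Q" "c < b" and z: "z < c" "z \<in> set r \<union> set W" "z \<le> hd W"
  shows "contains (Q @ stack_run T_132_321 (b # r) W) [2,3,1]"
proof -
  have "subseq [b, hd W] (b # W)" "subseq [b,z] (b # W) \<or> (z \<in> set r \<and> z < hd W)"
    using W(2) z(2,3) hd_in_set[OF W(2)] by (auto simp: subseq_singleton_left le_less)
  then have "subseq [b,z] (stack_run T_132_321 r (b # W))"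
    using stack_run_132_321_before_small W(3) by blast
  with c(1) have "subseq [c] Q" "subseq [b,z] (stack_run T_132_321 r (b # W))"
    by (simp_all add: subseq_singleton_left)
  then have "subseq ([c] @ [b,z]) (Q @ stack_run T_132_321 (b # r) W)"
    unfolding stack_run_132_321_push_increasing[OF W(1)] by (rule list_emb_append_mono)
  then show ?thesis unfolding contains_231_iff using c(2) z(1) by force
qed

lemma contains_231_unpopped_peak:
  assumes W: "sorted_wrt (<) W" "W \<noteq> []" "hd W < a"
    and push: "b < a" "\<forall>w\<in>set W. w < a \<longrightarrow> w < b" and dist: "distinct (b # r @ a # W)"
    and z: "z \<in> set r \<union> set W" "z \<le> hd W"
  shows "contains (P @ stack_run T_132_321 (b # r) (a # W)) [2,3,1]"
proof -
  have "avoids_all T_132_321 (b # a # W)"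
    using avoids_132_321_Cons_Cons_increasing_iff[OF W(1)] push by auto
  then have run: "stack_run T_132_321 (b # r) (a # W) = stack_run T_132_321 r (b # a # W)"
    by (rule stack_run_push)
  have "hd W < b" using push(2) W(2,3) by simp
  then have "z < b" using z(2) by simp
  have "subseq [a, hd W] (b # a # W)" "subseq [a,z] (b # a # W) \<or> (z \<in> set r \<and> z < hd W)"
    using W(2) z hd_in_set[OF W(2)] by (auto simp: subseq_singleton_left le_less)
  then have "subseq [a,z] (stack_run T_132_321 r (b # a # W))"
    using stack_run_132_321_before_small W(3) by blast
  moreover have "subseq [b,a] (stack_run T_132_321 r (b # a # W))"
    by (rule subseq_order.order_trans[OF _ subseq_stack_run]) simp
  moreover have "distinct (stack_run T_132_321 r (b # a # W))"
    using dist by (simp add: distinct_stack_run)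
  ultimately have "subseq [b,a,z] (stack_run T_132_321 r (b # a # W))"
    by (intro subseq_pair_join)
  then have "subseq [b,a,z] (P @ stack_run T_132_321 (b # r) (a # W))"
    unfolding run by (rule subseq_drop_many)
  then show ?thesis unfolding contains_231_iff using \<open>z < b\<close> push(1) by blast
qed

lemma contains_231_pop_peak:
  assumes W: "sorted_wrt (<) W" "W \<noteq> []" "hd W < a" and dist: "distinct (P @ b # r @ a # W)"
    and not_sortable: "\<not> sortable_from W (Some a) (Some a) (b # r)"
    and z: "z \<in> set (b # r) \<union> set W" "z \<le> hd W"
    and popped: "\<not> sortable_from W None (Some a) (b # r) \<Longrightarrow>
      contains ((P @ [a]) @ stack_run T_132_321 (b # r) W) [2,3,1]"
  shows "contains (P @ stack_run T_132_321 (b # r) (a # W)) [2,3,1]"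
proof (cases "b < a \<and> (\<forall>w\<in>set W. w < a \<longrightarrow> w < b)")
  case True
  then have "hd W < b" using W(2,3) by simp
  then have "z \<in> set r \<union> set W" using z by auto
  then show ?thesis using contains_231_unpopped_peak[OF W] True dist z(2) by simp
next
  case False
  then show ?thesis using not_sortable popped stack_run_132_321_pop_peak[OF W] dist by simp
qed

text \<open>The entry z is the minimum of everything involved; it plays the 1 of the 231. The
  prefix P is the output produced so far and contains the last peak.\<close>
lemma not_sortable_from_231:
  "\<not> sortable_from W None B inp \<Longrightarrow> sorted_wrt (<) W \<Longrightarrow> distinct (P @ inp @ W) \<Longrightarrow>
   set_option B \<subseteq> set P \<Longrightarrow> z \<in> set inp \<union> set W \<Longrightarrow> \<forall>v \<in> set P \<union> set inp \<union> set W. z \<le> v \<Longrightarrow>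
   contains (P @ stack_run T_132_321 inp W) [2,3,1]"
proof (induction inp arbitrary: P W B)
  case (Cons b r)
  note push = stack_run_132_321_push_increasing[OF Cons.prems(2)]
  show ?case
  proof (cases "W = [] \<or> b < hd W")
    case True
    then show ?thesis using Cons.IH[of "b # W" B P] Cons.prems sorted_wrt_Cons_less_hd[OF Cons.prems(2) True]
      unfolding push by simp
  next
    case False
    moreover have "b \<noteq> hd W" using Cons.prems(3) False by (cases W) auto
    ultimately have W: "W \<noteq> []" "hd W < b" by auto
    have "z \<le> hd W" using Cons.prems(6) hd_in_set[OF W(1)] by blast
    then have z: "z \<in> set r \<union> set W" "z \<le> hd W" using Cons.prems(5) W(2) by auto
    show ?thesis
    proof (cases "\<forall>c\<in>set_option B. b < c")
      case True
      then have not_sortable: "\<not> sortable_from W (Some b) (Some b) r" using Cons.prems(1) False by simp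
      then obtain b' r' where r: "r = b' # r'" by (cases r) auto
      have "contains (P @ stack_run T_132_321 r (b # W)) [2,3,1]"
        unfolding r
      proof (rule contains_231_pop_peak[OF Cons.prems(2) W])
        show "distinct (P @ b' # r' @ b # W)" using Cons.prems(3) r by auto
        show "\<not> sortable_from W (Some b) (Some b) (b' # r')" using not_sortable r by simp
        show "z \<in> set (b' # r') \<union> set W" "z \<le> hd W" using z r by auto
        show "contains ((P @ [b]) @ stack_run T_132_321 (b' # r') W) [2,3,1]"
          if "\<not> sortable_from W None (Some b) (b' # r')"
          using Cons.IH[OF that[folded r] Cons.prems(2), of "P @ [b]"] Cons.prems(3,6) z r by auto
      qed
      then show ?thesis unfolding push .
    next
      case False
      then obtain c where c: "c \<in> set P" "\<not> b < c" using Cons.prems(4) by auto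
      moreover have "c \<noteq> b" "c \<noteq> z" using c(1) Cons.prems(3) z(1) by auto
      moreover have "z \<le> c" using Cons.prems(6) c(1) by blast
      ultimately have "c < b" "z < c" by auto
      then show ?thesis by (rule contains_231_new_peak_above_bound[OF Cons.prems(2) W c(1) _ _ z])
    qed
  qed
qed simp

lemma s_132_321_sorts_iff:
  assumes x: "x \<in> permutations_of_set {1..n}"
  shows "west_s (s_map T_132_321 x) = [1..<n+1] \<longleftrightarrow> sortable_from [] None None x"
proof
  have sx: "set x = {1..n}" and dx: "distinct x" using x by (auto simp: permutations_of_set_def)
  assume sorted: "west_s (s_map T_132_321 x) = [1..<n+1]"
  show "sortable_from [] None None x"
  proof (rule ccontr)
    assume "\<not> sortable_from [] None None x"
    moreover from this have "set x \<noteq> {}" by (cases x) auto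
    then have "1 \<in> set x" using sx by auto
    ultimately have "contains ([] @ stack_run T_132_321 x []) [2,3,1]"
      using not_sortable_from_231[of "[]" None x "[]" 1] dx sx by auto
    then have "\<not> sorted (west_s (s_map T_132_321 x))"
      using dx by (intro contains_231_not_sorted_west_s) (simp_all add: s_map_def distinct_stack_run)
    then show False using sorted by (metis sorted_upt)
  qed
next
  have sx: "set x = {1..n}" and dx: "distinct x" using x by (auto simp: permutations_of_set_def)
  assume "sortable_from [] None None x"
  then obtain D I where DI: "s_map T_132_321 x = D @ I" "sorted_wrt (>) D" "sorted_wrt (<) I"
    using sortable_from_output[of "[]" None x] dx by (auto simp: s_map_def dec_inc_split_def)
  have "distinct (D @ I)" using DI(1) dx by (metis distinct_stack_run append_Nil2 s_map_def)
  then have "sorted (west_s (D @ I))" "distinct (west_s (D @ I))"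
    using sorted_west_s_decreasing_increasing[OF DI(2,3)]
    by (simp_all add: west_s_def s_map_def distinct_stack_run)
  moreover have "set (D @ I) = set x" unfolding DI(1)[symmetric] s_map_def by (simp add: set_stack_run)
  then have "set (west_s (D @ I)) = set [1..<n+1]"
    using sx by (auto simp: west_s_def s_map_def set_stack_run)
  ultimately have "west_s (D @ I) = [1..<n+1]"
    by (metis sorted_distinct_set_unique sorted_upt distinct_upt)
  then show "west_s (s_map T_132_321 x) = [1..<n+1]" using DI(1) by simp
qed

definition sortable_perms :: "nat \<Rightarrow> nat list set" where
  "sortable_perms n = {x \<in> permutations_of_set {1..n}. sortable_from [] None None x}"

lemma Sort_set_132_321: "Sort_set n [1,3,2] [3,2,1] = sortable_perms n"
  unfolding Sort_set_def sortable_perms_def using s_132_321_sorts_iff by blast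

section \<open>Inserting the maximum\<close>

fun desc_len :: "nat list \<Rightarrow> nat" where
  "desc_len [] = 0"
| "desc_len [a] = 1"
| "desc_len (a # b # r) = (if b < a then Suc (desc_len (b # r)) else 1)"

lemma desc_len_le_length: "desc_len y \<le> length y"
  by (induction y rule: desc_len.induct) auto

lemma desc_len_pos: "y \<noteq> [] \<Longrightarrow> 1 \<le> desc_len y"
  by (induction y rule: desc_len.induct) auto

lemma sorted_wrt_greater_take_iff:
  "sorted_wrt (>) (take k y) \<longleftrightarrow> k \<le> desc_len y \<or> desc_len y = length y"
proof (induction y arbitrary: k rule: desc_len.induct)
  case (2 a)
  then show ?case by (cases k) auto
next
  case (3 a b r)
  show ?case
  proof (cases k)
    case (Suc k')
    show ?thesis
    proof (cases "b < a")
      case True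
      have "\<forall>v\<in>set (take k' (b # r)). v < a" if "sorted_wrt (>) (take k' (b # r))"
        using that True by (cases k') auto
      then have "sorted_wrt (>) (take k (a # b # r)) \<longleftrightarrow> sorted_wrt (>) (take k' (b # r))"
        using Suc by auto
      then show ?thesis using "3.IH"[OF True, of k'] True Suc by simp
    next
      case False
      then have "sorted_wrt (>) (take k (a # b # r)) \<longleftrightarrow> k' = 0" using Suc by (cases k') auto
      then show ?thesis using False Suc by simp
    qed
  qed simp
qed simp

lemma desc_len_eqI:
  "sorted_wrt (>) (take k y) \<Longrightarrow> k < length y \<Longrightarrow> \<not> sorted_wrt (>) (take (Suc k) y) \<Longrightarrow> desc_len y = k"
  using sorted_wrt_greater_take_iff[of k y] sorted_wrt_greater_take_iff[of "Suc k" y] by auto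

lemma sortable_from_bottom_max:
  "W \<noteq> [] \<Longrightarrow> (\<forall>v\<in>set W \<union> set y \<union> set_option p. v < N) \<Longrightarrow>
   sortable_from (W @ [N]) p B y = sortable_from W p B y"
proof (induction y arbitrary: W p B)
  case (Cons b r)
  have "sortable_from (b # W @ [N]) None B r = sortable_from (b # W) None B r"
    using Cons.IH[of "b # W" None B] Cons.prems(2) by simp
  moreover have "sortable_from (W @ [N]) (Some b) (Some b) r = sortable_from W (Some b) (Some b) r"
    using Cons.IH[of W "Some b" "Some b"] Cons.prems by simp
  ultimately show ?case using Cons.prems by auto
qed simp

lemma sortable_from_bound_above:
  "\<forall>v\<in>set y. v < N \<Longrightarrow> sortable_from W p (Some N) y = sortable_from W p None y"
proof (induction y arbitrary: W p)
  case (Cons b r)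
  then show ?case using Cons.IH[of "b # W" None] by simp
qed simp

lemma sortable_from_decreasing_prefix:
  "sorted_wrt (>) q \<Longrightarrow> \<forall>a\<in>set q. \<forall>w\<in>set W. a < w \<Longrightarrow>
   sortable_from W None B (q @ z) = sortable_from (rev q @ W) None B z"
proof (induction q arbitrary: W)
  case (Cons a q)
  have "W = [] \<or> a < hd W" using Cons.prems(2) by (cases W) auto
  then have "sortable_from W None B ((a # q) @ z) = sortable_from (a # W) None B (q @ z)" by simp
  also have "\<dots> = sortable_from (rev q @ a # W) None B z"
    using Cons.IH[of "a # W"] Cons.prems by auto
  finally show ?case by simp
qed simp

text \<open>Once a peak smaller than N has been popped, N can never be processed: it cannot extend
  the increasing part of the stack, and as a new peak it would exceed the previous one.\<close>
lemma not_sortable_from_max_ahead: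
  "W \<noteq> [] \<Longrightarrow> \<forall>w\<in>set W. w < N \<Longrightarrow> N \<in> set zs \<Longrightarrow> \<forall>v\<in>set zs. v \<le> N \<Longrightarrow> c < N \<Longrightarrow>
   \<forall>a\<in>set_option p. a < N \<Longrightarrow> \<not> sortable_from W p (Some c) zs"
proof (induction zs arbitrary: W p c)
  case (Cons z zs)
  have "hd W < N" using Cons.prems(1,2) by simp
  show ?case
  proof (cases "z = N")
    case True
    then show ?thesis using Cons.prems(1,5) \<open>hd W < N\<close> by auto
  next
    case False
    then have "z < N" "N \<in> set zs" using Cons.prems(3,4) by auto
    then show ?thesis
      using Cons.IH[where W="z # W" and p=None and c=c] Cons.IH[where W=W and p="Some z" and c=z]
        Cons.prems by auto
  qed
qed simp

lemma sortable_insert_max_front: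
  assumes "\<forall>v\<in>set y. v < N"
  shows "sortable_from [] None None (N # y) = sortable_from [] None None y"
proof (cases y)
  case (Cons b r)
  then have "sortable_from [] None None (N # y) = sortable_from ([b] @ [N]) None None r"
    using assms by simp
  also have "\<dots> = sortable_from [b] None None r"
    by (rule sortable_from_bottom_max) (use assms Cons in auto)
  finally show ?thesis using Cons by simp
qed simp

lemma sortable_insert_max_after_decreasing:
  assumes q: "sorted_wrt (>) q" "q \<noteq> []" and N: "\<forall>v\<in>set (q @ z). v < N" and d: "distinct (q @ z)"
  shows "sortable_from [] None None (q @ N # z) \<longleftrightarrow>
         sortable_from [] None None (q @ z) \<and> (z = [] \<or> hd z < hd q)"
proof -
  have prefix: "sortable_from [] None None (q @ u) = sortable_from (rev q) None None u" for u
    using sortable_from_decreasing_prefix[OF q(1), of "[]"] by simp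
  have "last q < N" using N q(2) by simp
  then have peak_N: "sortable_from (rev q) None None (N # z) = sortable_from (rev q) (Some N) (Some N) z"
    using q(2) by (simp add: hd_rev)
  show ?thesis
  proof (cases z)
    case Nil
    then show ?thesis using prefix[of "[N]"] prefix[of "[]"] by simp
  next
    case (Cons b r)
    have bN: "b < N" "\<forall>v\<in>set r. v < N" using N Cons by auto
    have "last q \<in> set q" "hd q \<in> set q" using q(2) by simp_all
    moreover have "b \<noteq> last q" "b \<noteq> hd q" using d Cons calculation by auto
    ultimately have q_bounds: "\<forall>v\<in>set q. last q \<le> v \<and> v \<le> hd q" "last q \<in> set q" "hd q \<in> set q"
      using sorted_wrt_greater_le_hd[OF q(1)] sorted_wrt_greater_last_le[OF q(1)] by auto
    show ?thesis
    proof (cases "b < last q")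
      case True
      have "sortable_from (rev q) (Some N) (Some N) (b # r) = sortable_from (b # rev q) None (Some N) r"
        using True q_bounds \<open>last q < N\<close> q(2) by (auto simp: hd_rev)
      also have "\<dots> = sortable_from (b # rev q) None None r" by (rule sortable_from_bound_above[OF bN(2)])
      also have "\<dots> = sortable_from (rev q) None None (b # r)" using True q(2) by (simp add: hd_rev)
      finally have "sortable_from (rev q) (Some N) (Some N) z = sortable_from (rev q) None None z"
        using Cons by simp
      moreover have "b < hd q" using True q_bounds by fastforce
      ultimately show ?thesis using prefix[of "N # z"] prefix[of z] peak_N Cons by simp
    next
      case False
      then have "last q < b" using \<open>b \<noteq> last q\<close> by simp
      have "(\<forall>w\<in>set q. w < b) \<longleftrightarrow> hd q < b" using q_bounds by fastforce
      then have "sortable_from (rev q) (Some N) (Some N) (b # r) \<longleftrightarrow>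
                 b < hd q \<and> sortable_from (rev q) (Some b) (Some b) r"
        using False bN(1) q(2) \<open>b \<noteq> hd q\<close> q_bounds N by (auto simp: hd_rev)
      moreover have "sortable_from (rev q) None None (b # r) = sortable_from (rev q) (Some b) (Some b) r"
        using False q(2) by (simp add: hd_rev)
      ultimately show ?thesis using prefix[of "N # z"] prefix[of z] peak_N Cons by (simp add: conj_commute)
    qed
  qed
qed

lemma not_sortable_insert_max_after_ascent:
  assumes q: "sorted_wrt (>) q" "q \<noteq> []" "\<forall>v\<in>set q. v < N" and b: "last q < b" "b < N"
    and N: "N \<in> set rest" "\<forall>v\<in>set rest. v \<le> N"
  shows "\<not> sortable_from [] None None (q @ b # rest)"
proof -
  have "sortable_from [] None None (q @ b # rest) = sortable_from (rev q) None None (b # rest)"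
    using sortable_from_decreasing_prefix[OF q(1), of "[]"] by simp
  also have "\<dots> = sortable_from (rev q) (Some b) (Some b) rest"
    using b(1) q(2) by (simp add: hd_rev)
  finally show ?thesis using not_sortable_from_max_ahead[of "rev q" N rest b "Some b"] q b N by auto
qed

lemma not_sortable_insert_max_beyond_desc_len:
  assumes d: "distinct y" and N: "\<forall>v\<in>set y. v < N" and i: "desc_len y < i" "i \<le> length y"
  shows "\<not> sortable_from [] None None (take i y @ N # drop i y)"
proof -
  define k where "k = desc_len y"
  define q where "q = take k y"
  define b where "b = y ! k"
  define s where "s = drop (Suc k) y"
  have "y \<noteq> []" using i by auto
  then have k: "1 \<le> k" "k < i" "k < length y" using i desc_len_pos[of y] unfolding k_def by auto
  have y: "y = q @ b # s" "length q = k"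
    unfolding q_def b_def s_def using k(3) by (simp_all add: id_take_nth_drop)
  have q: "sorted_wrt (>) q" "q \<noteq> []" "\<forall>v\<in>set q. v < N"
    using k N sorted_wrt_greater_take_iff[of k y] unfolding q_def k_def by (auto dest: in_set_takeD)
  have "take (Suc k) y = q @ [b]" using y by simp
  then have "\<not> sorted_wrt (>) (q @ [b])"
    using sorted_wrt_greater_take_iff[of "Suc k" y] k(3) unfolding k_def by simp
  then have "\<not> b < last q"
    using sorted_wrt_greater_last_le[OF q(1)] q(1) by (force simp: sorted_wrt_append)
  moreover have "b \<noteq> last q" using d y(1) q(2) by auto
  ultimately have "last q < b" by simp
  define rest where "rest = take (i - Suc k) s @ N # drop i y"
  have "take i y = q @ take (i - k) (b # s)" using y k(2) by simp
  also have "i - k = Suc (i - Suc k)" using k(2) by simp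
  finally have "take i y = q @ b # take (i - Suc k) s" by simp
  then have x: "take i y @ N # drop i y = q @ b # rest" unfolding rest_def by simp
  have "\<not> sortable_from [] None None (q @ b # rest)"
  proof (rule not_sortable_insert_max_after_ascent[OF q \<open>last q < b\<close>])
    show "b < N" using N y(1) by simp
    show "N \<in> set rest" unfolding rest_def by simp
    have "set rest \<subseteq> insert N (set y)"
      unfolding rest_def s_def by (auto dest: in_set_takeD in_set_dropD)
    then show "\<forall>v\<in>set rest. v \<le> N" using N by force
  qed
  then show ?thesis unfolding x .
qed

definition perm_extra_slot :: "nat list \<Rightarrow> bool" where
  "perm_extra_slot y \<longleftrightarrow> desc_len y = length y \<or> y ! desc_len y < y ! 0"

definition perm_slots :: "nat list \<Rightarrow> nat" where
  "perm_slots y = desc_len y + (if perm_extra_slot y then 1 else 0)"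

lemma perm_slots_pos: "1 \<le> perm_slots y"
  unfolding perm_slots_def perm_extra_slot_def by (cases "y = []") (auto dest: desc_len_pos)

lemma perm_slots_le: "perm_slots y \<le> Suc (length y)"
  using desc_len_le_length[of y] by (simp add: perm_slots_def)

lemma less_perm_slots_iff:
  assumes i: "1 \<le> i" "i \<le> desc_len y"
  shows "i < perm_slots y \<longleftrightarrow> drop i y = [] \<or> hd (drop i y) < hd (take i y)"
proof -
  have len: "i \<le> length y" using i desc_len_le_length[of y] by simp
  then have hd_take: "hd (take i y) = y ! 0" using i(1) by (cases y; cases i) auto
  show ?thesis
  proof (cases "i = desc_len y")
    case True
    then show ?thesis using len hd_take
      by (cases "i < length y") (auto simp: perm_slots_def perm_extra_slot_def hd_drop_conv_nth)
  next
    case False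
    then have "sorted_wrt (>) (take (Suc i) y)" "i < length y"
      using i sorted_wrt_greater_take_iff[of "Suc i" y] desc_len_le_length[of y] by auto
    then have "y ! i < y ! 0" using i(1) by (auto simp: sorted_wrt_iff_nth_less)
    then show ?thesis using False i \<open>i < length y\<close> hd_take
      by (simp add: perm_slots_def hd_drop_conv_nth)
  qed
qed

lemma sortable_insert_max_iff:
  assumes d: "distinct y" and N: "\<forall>v\<in>set y. v < N" and i: "i \<le> length y"
  shows "sortable_from [] None None (take i y @ N # drop i y) \<longleftrightarrow>
         sortable_from [] None None y \<and> i < perm_slots y"
proof -
  consider "i = 0" | "1 \<le> i" "i \<le> desc_len y" | "desc_len y < i" by linarith
  then show ?thesis
  proof cases
    case 1
    then show ?thesis using sortable_insert_max_front[OF N] perm_slots_pos[of y] by simp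
  next
    case 2
    then have "sorted_wrt (>) (take i y)" "take i y \<noteq> []"
      using i sorted_wrt_greater_take_iff[of i y] by auto
    then show ?thesis
      using sortable_insert_max_after_decreasing[of "take i y" "drop i y" N] N d less_perm_slots_iff[OF 2]
      by simp
  next
    case 3
    then show ?thesis using not_sortable_insert_max_beyond_desc_len[OF d N 3 i]
      by (simp add: perm_slots_def)
  qed
qed

definition insert_max :: "nat list \<Rightarrow> nat \<Rightarrow> nat list" where
  "insert_max y i = take i y @ Suc (length y) # drop i y"

definition remove_max :: "nat list \<Rightarrow> nat list \<times> nat" where
  "remove_max x = (removeAll (length x) x, length (takeWhile (\<lambda>v. v \<noteq> length x) x))"

lemma remove_max_insert_max:
  assumes "Suc (length y) \<notin> set y" and "i \<le> length y"
  shows "remove_max (insert_max y i) = (y, i)"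
proof -
  have notin: "Suc (length y) \<notin> set (take i y)" "Suc (length y) \<notin> set (drop i y)"
    using assms(1) by (auto dest: in_set_takeD in_set_dropD)
  have "length (insert_max y i) = Suc (length y)" using assms(2) by (simp add: insert_max_def)
  moreover have "removeAll (Suc (length y)) (insert_max y i) = y"
    using notin by (simp add: insert_max_def)
  moreover have "takeWhile (\<lambda>v. v \<noteq> Suc (length y)) (insert_max y i) = take i y"
    unfolding insert_max_def using notin(1) by (rule takeWhile_neq_append_Cons)
  ultimately show ?thesis using assms(2) by (simp add: remove_max_def)
qed

lemma insert_max_in_permutations:
  assumes y: "y \<in> permutations_of_set {1..n}" and i: "i \<le> n"
  shows "insert_max y i \<in> permutations_of_set {1..Suc n}"
proof -
  have y': "set y = {1..n}" "distinct y" "length y = n"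
    using y length_permutations_of_set_atLeastAtMost by (auto simp: permutations_of_set_def)
  have "set (take i y) \<union> set (drop i y) = set y" by (metis append_take_drop_id set_append)
  moreover have "set (take i y) \<inter> set (drop i y) = {}"
    using y'(2) by (simp add: set_take_disj_set_drop_if_distinct)
  ultimately show ?thesis
    using y' unfolding insert_max_def permutations_of_set_def by (auto dest: in_set_takeD in_set_dropD)
qed

lemma remove_max_in_permutations:
  assumes x: "x \<in> permutations_of_set {1..Suc n}"
  obtains y i where "remove_max x = (y, i)" "y \<in> permutations_of_set {1..n}" "i \<le> n"
    "insert_max y i = x"
proof -
  have sx: "set x = {1..Suc n}" and dx: "distinct x" and lx: "length x = Suc n"
    using x length_permutations_of_set_atLeastAtMost by (auto simp: permutations_of_set_def)
  have "Suc n \<in> set x" using sx by simp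
  then obtain A B where x_split: "x = A @ Suc n # B" by (meson split_list)
  then have AB: "Suc n \<notin> set A" "Suc n \<notin> set B" using dx by auto
  have "set (A @ B) = set x - {Suc n}" using AB x_split by auto
  then have "set (A @ B) = {1..n}" using sx by (simp add: atLeastAtMostSuc_conv)
  moreover have "distinct (A @ B)" using dx x_split by auto
  ultimately have "A @ B \<in> permutations_of_set {1..n}" by (simp add: permutations_of_set_def)
  moreover have "remove_max x = (A @ B, length A)"
    using AB lx x_split by (simp add: remove_max_def takeWhile_neq_append_Cons)
  moreover have "insert_max (A @ B) (length A) = x" "length A \<le> n"
    using lx x_split by (simp_all add: insert_max_def)
  ultimately show ?thesis using that by blast
qed

lemma insert_max_in_sortable_perms_iff:
  assumes y: "y \<in> permutations_of_set {1..n}" and i: "i \<le> n"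
  shows "insert_max y i \<in> sortable_perms (Suc n) \<longleftrightarrow>
         y \<in> sortable_perms n \<and> i < perm_slots y"
proof -
  have "distinct y" "\<forall>v\<in>set y. v < Suc (length y)" "length y = n"
    using y length_permutations_of_set_atLeastAtMost by (auto simp: permutations_of_set_def)
  then have "sortable_from [] None None (insert_max y i) \<longleftrightarrow>
             sortable_from [] None None y \<and> i < perm_slots y"
    unfolding insert_max_def using sortable_insert_max_iff i by simp
  then show ?thesis unfolding sortable_perms_def using insert_max_in_permutations[OF y i] y by blast
qed

lemma bij_betw_insert_max_sortable_perms:
  "bij_betw (\<lambda>(y, i). insert_max y i) (SIGMA y:sortable_perms n. {..<perm_slots y})
     (sortable_perms (Suc n))" (is "bij_betw ?f ?A ?B")
proof (rule bij_betw_byWitness[where f' = remove_max])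
  have perm: "y \<in> permutations_of_set {1..n}" "length y = n" "i \<le> n" if "(y, i) \<in> ?A" for y i
    using that perm_slots_le[of y] length_permutations_of_set_atLeastAtMost
    by (auto simp: sortable_perms_def)
  show "\<forall>a\<in>?A. remove_max (?f a) = a"
    using perm by (auto simp: permutations_of_set_def intro!: remove_max_insert_max)
  show "?f ` ?A \<subseteq> ?B"
    using perm insert_max_in_sortable_perms_iff by auto
  show "\<forall>x\<in>?B. ?f (remove_max x) = x"
  proof
    fix x assume "x \<in> ?B"
    then have "x \<in> permutations_of_set {1..Suc n}" by (simp add: sortable_perms_def)
    then obtain y i where "remove_max x = (y, i)" "insert_max y i = x"
      by (rule remove_max_in_permutations)
    then show "?f (remove_max x) = x" by simp
  qed
  show "remove_max ` ?B \<subseteq> ?A"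
  proof
    fix p assume "p \<in> remove_max ` ?B"
    then obtain x where x: "x \<in> ?B" "p = remove_max x" by blast
    then have "x \<in> permutations_of_set {1..Suc n}" by (simp add: sortable_perms_def)
    then obtain y i where "remove_max x = (y, i)" "y \<in> permutations_of_set {1..n}" "i \<le> n"
      "insert_max y i = x"
      by (rule remove_max_in_permutations)
    then show "p \<in> ?A" using insert_max_in_sortable_perms_iff x by auto
  qed
qed

definition perm_label :: "nat list \<Rightarrow> nat \<times> bool" where
  "perm_label y = (perm_slots y, perm_extra_slot y)"

lemma perm_label_insert_max_front:
  assumes "\<forall>v\<in>set y. v < Suc (length y)"
  shows "perm_label (insert_max y 0) = tree_rule (perm_label y) 0"
proof (cases y)
  case Nil
  then show ?thesis by (simp add: perm_label_def tree_rule_def perm_slots_def perm_extra_slot_def insert_max_def)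
next
  case (Cons b r)
  have x: "insert_max y 0 = Suc (length y) # y" by (simp add: insert_max_def)
  have "b < Suc (length y)" using assms Cons by simp
  then have desc: "desc_len (Suc (length y) # y) = Suc (desc_len y)" using Cons by simp
  have "perm_extra_slot (Suc (length y) # y)"
  proof (cases "desc_len y = length y")
    case True
    then show ?thesis using desc by (simp add: perm_extra_slot_def)
  next
    case False
    then have "y ! desc_len y < Suc (length y)" using assms desc_len_le_length[of y] by simp
    then show ?thesis using desc by (simp add: perm_extra_slot_def)
  qed
  then show ?thesis using desc x by (simp add: perm_label_def tree_rule_def perm_slots_def)
qed

lemma perm_label_insert_max_inner:
  assumes N: "\<forall>v\<in>set y. v < Suc (length y)" and i: "1 \<le> i" "i < perm_slots y"
  shows "perm_label (insert_max y i) = (i, False)"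
proof -
  let ?x = "insert_max y i"
  have il: "i \<le> length y" "i \<le> desc_len y"
    using i perm_slots_le[of y] by (auto simp: perm_slots_def split: if_splits)
  have take: "take i ?x = take i y" "take (Suc i) ?x = take i y @ [Suc (length y)]"
    using il by (simp_all add: insert_max_def)
  have "y \<noteq> []" using i(1) il(1) by auto
  have y0: "y ! 0 \<in> set (take i y)" "?x ! 0 = y ! 0"
    using \<open>y \<noteq> []\<close> i(1) by (cases y; cases i; simp add: insert_max_def)+
  then have "y ! 0 < Suc (length y)" using N by (auto dest: in_set_takeD)
  then have "\<not> sorted_wrt (>) (take (Suc i) ?x)"
    using take y0(1) by (auto simp: sorted_wrt_append intro!: bexI[of _ "y ! 0"])
  moreover have "sorted_wrt (>) (take i ?x)" using take il sorted_wrt_greater_take_iff[of i y] by simp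
  ultimately have "desc_len ?x = i" using il by (intro desc_len_eqI) (simp_all add: insert_max_def)
  moreover have "?x ! i = Suc (length y)" using il by (simp add: insert_max_def nth_append)
  ultimately have "\<not> perm_extra_slot ?x"
    using y0 \<open>y ! 0 < Suc (length y)\<close> il by (simp add: perm_extra_slot_def insert_max_def)
  then show ?thesis using \<open>desc_len ?x = i\<close> by (simp add: perm_label_def perm_slots_def)
qed

lemma perm_label_insert_max:
  "\<forall>v\<in>set y. v < Suc (length y) \<Longrightarrow> i < perm_slots y \<Longrightarrow>
   perm_label (insert_max y i) = tree_rule (perm_label y) i"
  using perm_label_insert_max_front perm_label_insert_max_inner by (cases "i = 0") (auto simp: tree_rule_def)

lemma sortable_perms_labels:
  "image_mset perm_label (mset_set (sortable_perms n)) = label_levels fst tree_rule {#(1, True)#} n"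
proof -
  have fin: "finite (sortable_perms m)" for m
    by (rule finite_subset[of _ "permutations_of_set {1..m}"]) (auto simp: sortable_perms_def)
  have bij: "bij_betw (\<lambda>(y, i). insert_max y i) (SIGMA y:sortable_perms m. {..<fst (perm_label y)})
      (sortable_perms (Suc m))" for m
    using bij_betw_insert_max_sortable_perms by (simp add: perm_label_def)
  have labels: "perm_label (insert_max y i) = tree_rule (perm_label y) i"
    if "y \<in> sortable_perms m" "i < fst (perm_label y)" for m y i
    using that length_permutations_of_set_atLeastAtMost
    by (intro perm_label_insert_max) (auto simp: sortable_perms_def permutations_of_set_def perm_label_def)
  have "sortable_perms 0 = {[]}" by (auto simp: sortable_perms_def)
  then have base: "image_mset perm_label (mset_set (sortable_perms 0)) = {#(1, True)#}"
    by (simp add: perm_label_def perm_slots_def perm_extra_slot_def)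
  have "image_mset perm_label (mset_set (sortable_perms n)) =
        label_levels fst tree_rule (image_mset perm_label (mset_set (sortable_perms 0))) n"
    by (rule generating_tree_levels[where S = sortable_perms and child = insert_max and lab = perm_label
          and deg = fst and succ = tree_rule, OF fin bij labels])
  then show ?thesis unfolding base .
qed

section \<open>Dyck paths avoiding dudu\<close>

lemma height_Nil [simp]: "height [] = 0"
  by (simp add: height_def)

lemma height_Cons [simp]: "height (x # w) = (if x then 1 else -1) + height w"
  by (simp add: height_def)

lemma height_append [simp]: "height (u @ v) = height u + height v"
  by (simp add: height_def)

lemma height_replicate [simp]: "height (replicate m x) = (if x then int m else - int m)"
  by (induction m) auto

definition stays_nonneg :: "int \<Rightarrow> bool list \<Rightarrow> bool" where
  "stays_nonneg h w \<longleftrightarrow> (\<forall>k\<le>length w. 0 \<le> h + height (take k w))"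

lemma stays_nonneg_Nil [simp]: "stays_nonneg h [] \<longleftrightarrow> 0 \<le> h"
  by (simp add: stays_nonneg_def)

lemma stays_nonneg_Cons [simp]:
  "stays_nonneg h (x # w) \<longleftrightarrow> 0 \<le> h \<and> stays_nonneg (h + (if x then 1 else -1)) w"
  unfolding stays_nonneg_def
proof (intro iffI conjI allI impI)
  assume H: "\<forall>k\<le>length (x # w). 0 \<le> h + height (take k (x # w))"
  show "0 \<le> h" using H[rule_format, of 0] by simp
  fix k assume "k \<le> length w"
  then show "0 \<le> h + (if x then 1 else -1) + height (take k w)" using H[rule_format, of "Suc k"] by simp
next
  fix k assume H: "0 \<le> h \<and> (\<forall>k\<le>length w. 0 \<le> h + (if x then 1 else -1) + height (take k w))"
    and k: "k \<le> length (x # w)"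
  then show "0 \<le> h + height (take k (x # w))" by (cases k) (auto simp: add.assoc)
qed

lemma stays_nonneg_imp_nonneg: "stays_nonneg h w \<Longrightarrow> 0 \<le> h"
  unfolding stays_nonneg_def by (metis add.right_neutral height_Nil le0 take_0)

lemma stays_nonneg_replicate_True [simp]:
  "stays_nonneg h (replicate m True @ w) \<longleftrightarrow> 0 \<le> h \<and> stays_nonneg (h + int m) w"
proof (induction m arbitrary: h)
  case 0
  then show ?case using stays_nonneg_imp_nonneg by auto
next
  case (Suc m)
  have "stays_nonneg h (replicate (Suc m) True @ w) = (0 \<le> h \<and> stays_nonneg (h + 1) (replicate m True @ w))"
    by simp
  also have "\<dots> = (0 \<le> h \<and> 0 \<le> h + 1 \<and> stays_nonneg (h + 1 + int m) w)" using Suc.IH by simp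
  also have "\<dots> = (0 \<le> h \<and> stays_nonneg (h + int (Suc m)) w)" by (auto simp: add.assoc)
  finally show ?case .
qed

lemma stays_nonneg_replicate_False [simp]:
  "stays_nonneg h (replicate m False @ w) \<longleftrightarrow> 0 \<le> h - int m \<and> stays_nonneg (h - int m) w"
proof (induction m arbitrary: h)
  case 0
  then show ?case using stays_nonneg_imp_nonneg by auto
next
  case (Suc m)
  have "stays_nonneg h (replicate (Suc m) False @ w) = (0 \<le> h \<and> stays_nonneg (h - 1) (replicate m False @ w))"
    by simp
  also have "\<dots> = (0 \<le> h \<and> 0 \<le> h - 1 - int m \<and> stays_nonneg (h - 1 - int m) w)" using Suc.IH by simp
  also have "\<dots> = (0 \<le> h - int (Suc m) \<and> stays_nonneg (h - int (Suc m)) w)" by (auto simp: algebra_simps)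
  finally show ?case .
qed

lemma dyck_path_iff: "dyck_path n w \<longleftrightarrow> length w = 2 * n \<and> height w = 0 \<and> stays_nonneg 0 w"
  unfolding dyck_path_def stays_nonneg_def by simp

abbreviation dudu :: "bool list" where "dudu \<equiv> [False, True, False, True]"

lemma sublist_dudu_True_Cons [simp]: "sublist dudu (True # v) \<longleftrightarrow> sublist dudu v"
  by (simp add: sublist_Cons_right)

lemma sublist_dudu_replicate_True [simp]: "sublist dudu (replicate m True @ v) \<longleftrightarrow> sublist dudu v"
  by (induction m) simp_all

lemma sublist_dudu_replicate_False:
  "sublist dudu (replicate (Suc m) False @ v) \<longleftrightarrow> sublist dudu (False # v)"
  by (induction m) (simp_all add: sublist_Cons_right)

lemma sublist_dudu_False_True_Cons:
  "sublist dudu (False # True # v) \<longleftrightarrow> prefix [False, True] v \<or> sublist dudu v"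
  by (simp add: sublist_Cons_right)

definition ups :: "bool list \<Rightarrow> nat" where
  "ups w = length (takeWhile (\<lambda>x. x) w)"

definition downs :: "bool list \<Rightarrow> nat" where
  "downs w = length (takeWhile Not (drop (ups w) w))"

definition after_peak :: "bool list \<Rightarrow> bool list" where
  "after_peak w = drop (ups w + downs w) w"

definition peak_word :: "nat \<Rightarrow> nat \<Rightarrow> bool list \<Rightarrow> bool list" where
  "peak_word a b r = replicate a True @ replicate b False @ r"

lemma takeWhile_id_replicate: "takeWhile (\<lambda>x. x) w = replicate (length (takeWhile (\<lambda>x. x) w)) True"
  by (induction w) auto

lemma takeWhile_Not_replicate: "takeWhile Not w = replicate (length (takeWhile Not w)) False"
  by (induction w) auto

lemma peak_word_decomp: "peak_word (ups w) (downs w) (after_peak w) = w"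
proof -
  have "w = takeWhile (\<lambda>x. x) w @ drop (ups w) w"
    unfolding ups_def by (metis takeWhile_dropWhile_id dropWhile_eq_drop)
  moreover have "drop (ups w) w = takeWhile Not (drop (ups w) w) @ drop (downs w) (drop (ups w) w)"
    unfolding downs_def by (metis takeWhile_dropWhile_id dropWhile_eq_drop)
  moreover have "drop (downs w) (drop (ups w) w) = after_peak w"
    unfolding after_peak_def by (simp add: add.commute)
  ultimately show ?thesis
    using takeWhile_id_replicate[of w] takeWhile_Not_replicate[of "drop (ups w) w"]
    unfolding peak_word_def ups_def[symmetric] downs_def[symmetric] by simp
qed

lemma after_peak_eq_dropWhile: "after_peak w = dropWhile Not (dropWhile (\<lambda>x. x) w)"
  unfolding after_peak_def downs_def ups_def by (simp add: dropWhile_eq_drop add.commute)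

lemma hd_after_peak: "after_peak w = [] \<or> hd (after_peak w)"
  unfolding after_peak_eq_dropWhile using hd_dropWhile[of Not] by fastforce

lemma after_peak_downs: "after_peak w = [] \<or> 1 \<le> downs w"
proof (cases "drop (ups w) w")
  case (Cons x v)
  moreover have "drop (ups w) w = dropWhile (\<lambda>x. x) w" unfolding ups_def by (simp add: dropWhile_eq_drop)
  ultimately have "\<not> x" using hd_dropWhile[of "\<lambda>x. x" w] by fastforce
  then show ?thesis using Cons by (simp add: downs_def)
qed (simp add: after_peak_def)

lemma peak_word_inv:
  assumes "1 \<le> b \<or> r = []" and "r = [] \<or> hd r"
  shows "ups (peak_word a b r) = a" "downs (peak_word a b r) = b" "after_peak (peak_word a b r) = r"
proof -
  let ?v = "replicate b False @ r"
  have "takeWhile (\<lambda>x. x) ?v = []" using assms by (cases b) auto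
  moreover have "takeWhile (\<lambda>x. x) (replicate a True @ ?v) = replicate a True @ takeWhile (\<lambda>x. x) ?v"
    by (induction a) auto
  ultimately show ups: "ups (peak_word a b r) = a" unfolding ups_def peak_word_def by simp
  have "takeWhile Not r = []" using assms(2) by (cases r) auto
  moreover have "takeWhile Not ?v = replicate b False @ takeWhile Not r" by (induction b) auto
  ultimately show downs: "downs (peak_word a b r) = b" unfolding downs_def ups by (simp add: peak_word_def)
  show "after_peak (peak_word a b r) = r" unfolding after_peak_def ups downs by (simp add: peak_word_def)
qed

lemma length_peak_word [simp]: "length (peak_word a b r) = a + b + length r"
  by (simp add: peak_word_def)

lemma height_peak_word [simp]: "height (peak_word a b r) = int a - int b + height r"
  by (simp add: peak_word_def)

lemma stays_nonneg_peak_word: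
  "stays_nonneg h (peak_word a b r) \<longleftrightarrow> 0 \<le> h \<and> 0 \<le> h + int a - int b \<and> stays_nonneg (h + int a - int b) r"
  by (auto simp: peak_word_def algebra_simps)

lemma sublist_dudu_peak_word:
  "1 \<le> b \<Longrightarrow> sublist dudu (peak_word a b r) \<longleftrightarrow> sublist dudu (False # r)"
  by (cases b) (simp_all add: peak_word_def sublist_dudu_replicate_False del: replicate_Suc)

definition dyck_no_dudu :: "nat \<Rightarrow> bool list set" where
  "dyck_no_dudu n = {w. dyck_path n w \<and> \<not> sublist dudu w}"

lemma peak_word_in_dyck_no_dudu_iff:
  "1 \<le> b \<Longrightarrow> peak_word a b r \<in> dyck_no_dudu n \<longleftrightarrow>
     a + b + length r = 2 * n \<and> int a - int b + height r = 0 \<and> b \<le> a \<and>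
     stays_nonneg (int a - int b) r \<and> \<not> sublist dudu (False # r)"
  by (auto simp: dyck_no_dudu_def dyck_path_iff stays_nonneg_peak_word sublist_dudu_peak_word)

lemma dyck_no_dudu_peak_conditions:
  assumes "w \<in> dyck_no_dudu n"
  shows "ups w + downs w + length (after_peak w) = 2 * n \<and>
         int (ups w) - int (downs w) + height (after_peak w) = 0 \<and> downs w \<le> ups w \<and>
         stays_nonneg (int (ups w) - int (downs w)) (after_peak w) \<and> \<not> sublist dudu (False # after_peak w)"
proof (cases "1 \<le> downs w")
  case True
  then show ?thesis using assms peak_word_in_dyck_no_dudu_iff[of "downs w" "ups w" "after_peak w"]
    by (simp add: peak_word_decomp)
next
  case False
  then have "downs w = 0" "after_peak w = []" using after_peak_downs[of w] by auto
  then have w: "w = replicate (ups w) True" using peak_word_decomp[of w] by (simp add: peak_word_def)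
  have "height w = 0" "length w = 2 * n" using assms by (simp_all add: dyck_no_dudu_def dyck_path_iff)
  then have "ups w = 0" "n = 0" by (subst (asm) (1 2) w; simp)+
  then show ?thesis using \<open>downs w = 0\<close> \<open>after_peak w = []\<close> by (simp add: sublist_Cons_right)
qed

definition dyck_extra_slot :: "bool list \<Rightarrow> bool" where
  "dyck_extra_slot w \<longleftrightarrow> after_peak w = [] \<or> 2 \<le> downs w"

definition dyck_slots :: "bool list \<Rightarrow> nat" where
  "dyck_slots w = ups w + (if dyck_extra_slot w then 1 else 0)"

definition dyck_label :: "bool list \<Rightarrow> nat \<times> bool" where
  "dyck_label w = (dyck_slots w, dyck_extra_slot w)"

text \<open>Child 0 lengthens the first ascent and the first descent by one step each; child i > 0
  inserts a valley d u after the i-th step of the first ascent.\<close>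
definition dyck_child :: "bool list \<Rightarrow> nat \<Rightarrow> bool list" where
  "dyck_child w i =
     (if i = 0 then peak_word (Suc (ups w)) (Suc (downs w)) (after_peak w)
      else peak_word i 1 (True # peak_word (ups w - i) (downs w) (after_peak w)))"

definition dyck_parent :: "bool list \<Rightarrow> bool list \<times> nat" where
  "dyck_parent w =
     (if downs w = 1 \<and> after_peak w \<noteq> [] then (replicate (ups w) True @ tl (after_peak w), ups w)
      else (peak_word (ups w - 1) (downs w - 1) (after_peak w), 0))"

lemma dyck_child_0_peak:
  "ups (dyck_child w 0) = Suc (ups w)" "downs (dyck_child w 0) = Suc (downs w)"
  "after_peak (dyck_child w 0) = after_peak w"
  using peak_word_inv[of "Suc (downs w)" "after_peak w" "Suc (ups w)"] hd_after_peak[of w]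
  by (simp_all add: dyck_child_def)

lemma dyck_child_inner_peak:
  assumes "1 \<le> i"
  shows "ups (dyck_child w i) = i" "downs (dyck_child w i) = 1"
    "after_peak (dyck_child w i) = True # peak_word (ups w - i) (downs w) (after_peak w)"
  using assms peak_word_inv[of 1 "True # peak_word (ups w - i) (downs w) (after_peak w)" i]
  by (simp_all add: dyck_child_def)

lemma less_dyck_slots_imp_le_ups: "i < dyck_slots w \<Longrightarrow> i \<le> ups w"
  by (simp add: dyck_slots_def split: if_splits)

lemma dyck_label_child:
  assumes "i < dyck_slots w"
  shows "dyck_label (dyck_child w i) = tree_rule (dyck_label w) i"
proof (cases "i = 0")
  case True
  then show ?thesis using dyck_child_0_peak[of w] after_peak_downs[of w]
    by (auto simp: dyck_label_def dyck_slots_def dyck_extra_slot_def tree_rule_def)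
next
  case False
  then show ?thesis using dyck_child_inner_peak[of i w]
    by (simp add: dyck_label_def dyck_slots_def dyck_extra_slot_def tree_rule_def)
qed

lemma dyck_parent_child:
  assumes "i < dyck_slots w"
  shows "dyck_parent (dyck_child w i) = (w, i)"
proof (cases "i = 0")
  case True
  then show ?thesis using dyck_child_0_peak[of w] after_peak_downs[of w]
    by (auto simp: dyck_parent_def peak_word_decomp)
next
  case False
  have "replicate i True @ replicate (ups w - i) True = replicate (ups w) True"
    using less_dyck_slots_imp_le_ups[OF assms] by (metis le_add_diff_inverse replicate_add)
  then have "replicate i True @ peak_word (ups w - i) (downs w) (after_peak w) = w"
    using peak_word_decomp[of w] by (metis append.assoc peak_word_def)
  then show ?thesis using False dyck_child_inner_peak[of i w] by (simp add: dyck_parent_def)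
qed

lemma not_sublist_dudu_valley_child:
  assumes no_dudu: "\<not> sublist dudu (False # after_peak w)" and i: "i < dyck_slots w"
  shows "\<not> sublist dudu (False # True # peak_word (ups w - i) (downs w) (after_peak w))"
proof -
  let ?v = "peak_word (ups w - i) (downs w) (after_peak w)"
  have "\<not> sublist dudu (replicate (downs w) False @ after_peak w)"
  proof (cases "downs w")
    case 0
    then show ?thesis using after_peak_downs[of w] by simp
  next
    case (Suc m)
    then show ?thesis using no_dudu by (simp add: sublist_dudu_replicate_False del: replicate_Suc)
  qed
  then have "\<not> sublist dudu ?v" by (simp add: peak_word_def)
  moreover have "\<not> prefix [False, True] ?v"
  proof (cases "i = ups w")
    case True
    then have "after_peak w = [] \<or> 2 \<le> downs w"
      using i by (simp add: dyck_slots_def dyck_extra_slot_def split: if_splits)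
    then show ?thesis
    proof
      assume "after_peak w = []"
      then have "True \<notin> set ?v" using True by (simp add: peak_word_def)
      then show ?thesis using set_mono_prefix by fastforce
    next
      assume "2 \<le> downs w"
      then obtain m where "downs w = Suc (Suc m)" by (metis add_2_eq_Suc le_Suc_ex)
      then show ?thesis using True by (simp add: peak_word_def)
    qed
  next
    case False
    then have "ups w - i \<noteq> 0" using less_dyck_slots_imp_le_ups[OF i] by simp
    then show ?thesis by (cases "ups w - i") (simp_all add: peak_word_def)
  qed
  ultimately show ?thesis by (simp add: sublist_dudu_False_True_Cons)
qed

lemma dyck_child_in_dyck_no_dudu:
  assumes w: "w \<in> dyck_no_dudu n" and i: "i < dyck_slots w"
  shows "dyck_child w i \<in> dyck_no_dudu (Suc n)"
proof -
  note c = dyck_no_dudu_peak_conditions[OF w]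
  show ?thesis
  proof (cases "i = 0")
    case True
    then show ?thesis using c by (simp add: dyck_child_def peak_word_in_dyck_no_dudu_iff)
  next
    case False
    then show ?thesis
      using c less_dyck_slots_imp_le_ups[OF i] not_sublist_dudu_valley_child[OF _ i]
      by (simp add: dyck_child_def peak_word_in_dyck_no_dudu_iff stays_nonneg_peak_word)
  qed
qed

lemma ups_replicate_True_append: "ups (replicate a True @ v) = a + ups v"
  by (induction a) (simp_all add: ups_def)

lemma dyck_slots_replicate_True_append:
  assumes "height v = - int a" and "1 \<le> a" and dudu: "\<not> sublist dudu (False # True # v)"
  shows "a < dyck_slots (replicate a True @ v)"
proof (cases "ups v = 0")
  case False
  then show ?thesis by (simp add: dyck_slots_def ups_replicate_True_append)
next
  case True
  then have v: "v = peak_word 0 (downs v) (after_peak v)" using peak_word_decomp[of v] by simp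
  have "downs v \<noteq> 0"
  proof
    assume "downs v = 0"
    then have "v = []" using v after_peak_downs[of v] by (simp add: peak_word_def)
    then show False using assms(1,2) by simp
  qed
  have "after_peak v = [] \<or> 2 \<le> downs v"
  proof (rule ccontr)
    assume "\<not> (after_peak v = [] \<or> 2 \<le> downs v)"
    then obtain r where "downs v = 1" "after_peak v = True # r"
      using \<open>downs v \<noteq> 0\<close> hd_after_peak[of v] by (cases "after_peak v") auto
    then have "v = False # True # r" using v by (simp add: peak_word_def)
    then show False using dudu by (simp add: sublist_Cons_right)
  qed
  moreover have "replicate a True @ v = peak_word a (downs v) (after_peak v)"
    using v by (simp add: peak_word_def)
  ultimately show ?thesis
    using peak_word_inv[of "downs v" "after_peak v" a] \<open>downs v \<noteq> 0\<close> hd_after_peak[of v]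
    by (simp add: dyck_slots_def dyck_extra_slot_def)
qed

lemma dyck_parent_valley:
  assumes w: "w \<in> dyck_no_dudu (Suc n)" and valley: "downs w = 1" "after_peak w \<noteq> []"
  shows "dyck_parent w \<in> (SIGMA v:dyck_no_dudu n. {..<dyck_slots v}) \<and> case_prod dyck_child (dyck_parent w) = w"
proof -
  obtain r where r: "after_peak w = True # r" using valley(2) hd_after_peak[of w] by (cases "after_peak w") auto
  note c = dyck_no_dudu_peak_conditions[OF w]
  let ?a = "ups w" let ?v = "replicate ?a True @ r"
  have parent: "dyck_parent w = (?v, ?a)" using valley r by (simp add: dyck_parent_def)
  have a: "1 \<le> ?a" "height r = - int ?a" using c valley r by auto
  have dudu: "\<not> sublist dudu (False # True # r)" using c r by simp
  then have "?v \<in> dyck_no_dudu n"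
    using c valley r by (simp add: dyck_no_dudu_def dyck_path_iff sublist_dudu_False_True_Cons)
  moreover have "?a < dyck_slots ?v" using dyck_slots_replicate_True_append[OF a(2,1) dudu] .
  moreover have "dyck_child ?v ?a = w"
  proof -
    have "ups ?v \<ge> ?a" by (simp add: ups_replicate_True_append)
    then have "replicate ?a True @ peak_word (ups ?v - ?a) (downs ?v) (after_peak ?v) = ?v"
      using peak_word_decomp[of ?v] by (metis append.assoc le_add_diff_inverse peak_word_def replicate_add)
    then have "peak_word (ups ?v - ?a) (downs ?v) (after_peak ?v) = r" by simp
    then show ?thesis using a(1) peak_word_decomp[of w] valley r by (simp add: dyck_child_def)
  qed
  ultimately show ?thesis using parent by simp
qed

lemma dyck_parent_peak:
  assumes w: "w \<in> dyck_no_dudu (Suc n)" and peak: "downs w \<noteq> 1 \<or> after_peak w = []"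
  shows "dyck_parent w \<in> (SIGMA v:dyck_no_dudu n. {..<dyck_slots v}) \<and> case_prod dyck_child (dyck_parent w) = w"
proof -
  note c = dyck_no_dudu_peak_conditions[OF w]
  let ?a = "ups w" and ?b = "downs w" and ?r = "after_peak w"
  let ?v = "peak_word (?a - 1) (?b - 1) ?r"
  have "?b \<noteq> 0"
  proof
    assume "?b = 0"
    then have "?r = []" using after_peak_downs[of w] by simp
    then show False using c \<open>?b = 0\<close> by auto
  qed
  then have b: "1 \<le> ?b" "?b \<le> ?a" using c by auto
  have parent: "dyck_parent w = (?v, 0)" using peak by (auto simp: dyck_parent_def)
  have "1 \<le> ?b - 1 \<or> ?r = []" using peak b by auto
  note inv = peak_word_inv[OF this hd_after_peak[of w], of "?a - 1"]
  have "?v \<in> dyck_no_dudu n"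
  proof (cases "?b = 1")
    case True
    then have "?r = []" "?a = 1" using peak c by auto
    then show ?thesis using c True by (simp add: dyck_no_dudu_def dyck_path_iff peak_word_def)
  next
    case False
    then show ?thesis using c b by (simp add: peak_word_in_dyck_no_dudu_iff)
  qed
  moreover have "0 < dyck_slots ?v"
    using inv b peak by (cases "?a = 1") (auto simp: dyck_slots_def dyck_extra_slot_def)
  moreover have "dyck_child ?v 0 = w"
    using inv b peak_word_decomp[of w] by (simp add: dyck_child_def)
  ultimately show ?thesis using parent by simp
qed

lemma bij_betw_dyck_child:
  "bij_betw (\<lambda>(v, i). dyck_child v i) (SIGMA v:dyck_no_dudu n. {..<dyck_slots v}) (dyck_no_dudu (Suc n))"
proof (rule bij_betw_byWitness[where f' = dyck_parent])
  show "\<forall>p\<in>SIGMA v:dyck_no_dudu n. {..<dyck_slots v}. dyck_parent (case p of (v, i) \<Rightarrow> dyck_child v i) = p"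
    by (auto intro: dyck_parent_child)
  show "(\<lambda>(v, i). dyck_child v i) ` (SIGMA v:dyck_no_dudu n. {..<dyck_slots v}) \<subseteq> dyck_no_dudu (Suc n)"
    by (auto intro: dyck_child_in_dyck_no_dudu)
  show "\<forall>w\<in>dyck_no_dudu (Suc n). (case dyck_parent w of (v, i) \<Rightarrow> dyck_child v i) = w"
    using dyck_parent_valley dyck_parent_peak by metis
  show "dyck_parent ` dyck_no_dudu (Suc n) \<subseteq> (SIGMA v:dyck_no_dudu n. {..<dyck_slots v})"
    using dyck_parent_valley dyck_parent_peak by blast
qed

lemma dyck_no_dudu_labels:
  "image_mset dyck_label (mset_set (dyck_no_dudu n)) = label_levels fst tree_rule {#(1, True)#} n"
proof -
  have fin: "finite (dyck_no_dudu m)" for m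
    using finite_lists_length_eq[of "UNIV :: bool set" "2 * m"]
    by (rule rev_finite_subset) (auto simp: dyck_no_dudu_def dyck_path_def)
  have bij: "bij_betw (\<lambda>(v, i). dyck_child v i) (SIGMA v:dyck_no_dudu m. {..<fst (dyck_label v)})
      (dyck_no_dudu (Suc m))" for m
    using bij_betw_dyck_child by (simp add: dyck_label_def)
  have labels: "dyck_label (dyck_child v i) = tree_rule (dyck_label v) i"
    if "v \<in> dyck_no_dudu m" "i < fst (dyck_label v)" for m v i
    using that(2) dyck_label_child by (simp add: dyck_label_def)
  have "dyck_no_dudu 0 = {[]}" by (auto simp: dyck_no_dudu_def dyck_path_def)
  then have base: "image_mset dyck_label (mset_set (dyck_no_dudu 0)) = {#(1, True)#}"
    by (simp add: dyck_label_def dyck_slots_def dyck_extra_slot_def after_peak_def ups_def)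
  have "image_mset dyck_label (mset_set (dyck_no_dudu n)) =
        label_levels fst tree_rule (image_mset dyck_label (mset_set (dyck_no_dudu 0))) n"
    by (rule generating_tree_levels[where S = dyck_no_dudu and child = dyck_child and lab = dyck_label
          and deg = fst and succ = tree_rule, OF fin bij labels])
  then show ?thesis unfolding base .
qed

theorem theorem1p1:
  fixes n :: nat
  assumes "n \<ge> 1"
  shows "card (Sort_set n [1,3,2] [3,2,1]) = A102407 n"
proof -
  have "card (sortable_perms n) = card (dyck_no_dudu n)"
    using arg_cong[OF sortable_perms_labels, of size] arg_cong[OF dyck_no_dudu_labels, of size] by simp
  then show ?thesis unfolding Sort_set_132_321 A102407_def dyck_no_dudu_def .
qed

end
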